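(* For any $\lambda>0$ there exists an exponential set $\mathcal Y$ of positive words over the alphabet $\{a,b\}$ with the following properties: ( * ) If $V$ is a subword of some $W\in\mathcal Y$ and $|V|\ge\lambda|W|$, then $V$ occurs in $W$ as a subword only once; and if this $V$ is also a subword of some $U\in\mathcal Y$, then $U\equiv W$. ( ** ) Every word in $\mathcal Y$ is $7$-aperiodic.
   Context: $|W|$ is the length of a word $W$; $U\equiv V$ means letter-by-letter equality of words. A positive word over $\{a,b\}$ is a word in the letters $a,b$ (no inverse letters). A reduced word is $s$-aperiodic if it contains no subword of the form $Y^s$ with $Y$ a non-empty word. A set $\mathcal Y$ of words is exponential if there exist constants $C$ and $c>1$ such that $\#\{Y\in\mathcal Y:|Y|\le i\}\ge c^i$ for every $i\ge C$. *)

theory Defs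
  imports Complex_Main "HOL-Library.Sublist"
begin

text \<open>The two-letter alphabet; positive words are lists over it.\<close>
datatype letter = a | b

type_synonym word = "letter list"

text \<open>Subword = contiguous factor: library notion sublist.
  Number of occurrences of V as a subword of W (starting positions).\<close>
definition occurrences :: "word \<Rightarrow> word \<Rightarrow> nat" where
  "occurrences V W = card {i. i + length V \<le> length W \<and> take (length V) (drop i W) = V}"

definition aperiodic :: "nat \<Rightarrow> word \<Rightarrow> bool" where
  "aperiodic s W \<longleftrightarrow> \<not> (\<exists>Y. Y \<noteq> [] \<and> sublist (concat (replicate s Y)) W)"

definition exponential :: "word set \<Rightarrow> bool" where
  "exponential \<Y> \<longleftrightarrow> (\<exists>(C::nat) (c::real). c > 1 \<and>
     (\<forall>i\<ge>C. real (card {Y \<in> \<Y>. length Y \<le> i}) \<ge> c ^ i))"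

end

theory Submission
  imports Defs
begin

text \<open>
  Call a finite word good if it contains no 7th power and no two occurrences at positions
  p < q of a factor of length l \<ge> repeat_bound (p + l), a bound of order 2 log(p + l) / log(3/2).
  If appending a letter to a good word of length n creates a violation, the violation ends at
  the new letter; hence the extended word is the periodic continuation of a good word of length
  n + 1 - 6j (a 7th power of period j) or n + 1 - repeat_bound e (a repetition ending at e).
  Counting these continuations shows by induction that the number of good words of length n
  grows at least by the factor 3/2 at every step, and Koenig's lemma yields an infinite word all
  of whose prefixes are good.

  This infinite word is cut into consecutive blocks, 2^(n div 8R) of them of each length n,
  which gives exponentially many 7-aperiodic words. For R \<ge> 1/\<lambda> a subword of length at
  least \<lambda>n of a block of length n is longer than the repetition bound at the end of that block,
  so it occurs only once in the whole infinite word: once in its block and in no other block.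
\<close>

section \<open>The repetition bound\<close>

definition repeat_bound :: "nat \<Rightarrow> nat" where
  "repeat_bound e = (LEAST l. 10 * (real e + 1) * (real e + 2) \<le> (3/2) ^ l)"

lemma repeat_bound_spec: "10 * (real e + 1) * (real e + 2) \<le> (3/2) ^ repeat_bound e"
  unfolding repeat_bound_def
proof (rule LeastI_ex)
  obtain l where "10 * (real e + 1) * (real e + 2) < (3/2) ^ l"
    using real_arch_pow by force
  then show "\<exists>l. 10 * (real e + 1) * (real e + 2) \<le> (3/2) ^ l"
    by (auto intro: less_imp_le)
qed

lemma repeat_bound_le: "10 * (real e + 1) * (real e + 2) \<le> (3/2) ^ l \<Longrightarrow> repeat_bound e \<le> l"
  unfolding repeat_bound_def by (rule Least_le)

lemma repeat_bound_mono: "e \<le> e' \<Longrightarrow> repeat_bound e \<le> repeat_bound e'"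
proof (rule repeat_bound_le)
  assume "e \<le> e'"
  then have "10 * (real e + 1) * (real e + 2) \<le> 10 * (real e' + 1) * (real e' + 2)"
    by (intro mult_mono) auto
  then show "10 * (real e + 1) * (real e + 2) \<le> (3/2) ^ repeat_bound e'"
    using repeat_bound_spec[of e'] by linarith
qed

lemma repeat_bound_pos: "0 < repeat_bound e"
proof (rule ccontr)
  assume "\<not> 0 < repeat_bound e"
  moreover have "10 * 2 \<le> 10 * (real e + 1) * (real e + 2)"
    by (intro mult_mono) auto
  ultimately show False
    using repeat_bound_spec[of e] by simp
qed

lemma two_thirds_power_repeat_bound: "(2/3) ^ repeat_bound e \<le> 1 / (10 * (real e + 1) * (real e + 2))"
proof -
  have "(2/3 :: real) ^ repeat_bound e = 1 / (3/2) ^ repeat_bound e"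
    by (simp add: power_divide)
  also have "\<dots> \<le> 1 / (10 * (real e + 1) * (real e + 2))"
    using repeat_bound_spec[of e] by (intro divide_left_mono) auto
  finally show ?thesis .
qed

lemma repeat_bound_le_double: "10 * (e + 1) * (e + 2) \<le> (2::nat) ^ k \<Longrightarrow> repeat_bound e \<le> 2 * k"
proof (rule repeat_bound_le)
  assume "10 * (e + 1) * (e + 2) \<le> (2::nat) ^ k"
  then have "10 * (real e + 1) * (real e + 2) \<le> 2 ^ k"
    by (metis (mono_tags) of_nat_1 of_nat_add of_nat_le_iff of_nat_mult of_nat_numeral of_nat_power)
  also have "\<dots> \<le> (9/4) ^ k"
    by (intro power_mono) auto
  also have "\<dots> = (3/2) ^ (2 * k)"
    by (simp add: power_mult power2_eq_square)
  finally show "10 * (real e + 1) * (real e + 2) \<le> (3/2) ^ (2 * k)" .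
qed

section \<open>Good words\<close>

text \<open>A 7th power of period j at position p is encoded as w ! (p + j + i) = w ! (p + i) for all i < 6j.\<close>

definition power7_free :: "word \<Rightarrow> bool" where
  "power7_free w \<longleftrightarrow>
     (\<forall>p j. 0 < j \<and> p + 7 * j \<le> length w \<longrightarrow> (\<exists>i<6 * j. w ! (p + j + i) \<noteq> w ! (p + i)))"

definition sparse_repeats :: "word \<Rightarrow> bool" where
  "sparse_repeats w \<longleftrightarrow>
     (\<forall>p q l. p < q \<and> q + l \<le> length w \<and> repeat_bound (p + l) \<le> l \<longrightarrow> (\<exists>i<l. w ! (q + i) \<noteq> w ! (p + i)))"

definition good :: "word \<Rightarrow> bool" where
  "good w \<longleftrightarrow> power7_free w \<and> sparse_repeats w"

lemma good_take: "good w \<Longrightarrow> good (take m w)"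
  unfolding good_def power7_free_def sparse_repeats_def
proof (elim conjE, intro conjI allI impI)
  fix p j
  assume "\<forall>p j. 0 < j \<and> p + 7 * j \<le> length w \<longrightarrow> (\<exists>i<6 * j. w ! (p + j + i) \<noteq> w ! (p + i))"
    and "0 < j \<and> p + 7 * j \<le> length (take m w)"
  then show "\<exists>i<6 * j. take m w ! (p + j + i) \<noteq> take m w ! (p + i)"
    by fastforce
next
  fix p q l
  assume "\<forall>p q l. p < q \<and> q + l \<le> length w \<and> repeat_bound (p + l) \<le> l \<longrightarrow> (\<exists>i<l. w ! (q + i) \<noteq> w ! (p + i))"
    and "p < q \<and> q + l \<le> length (take m w) \<and> repeat_bound (p + l) \<le> l"
  then show "\<exists>i<l. take m w ! (q + i) \<noteq> take m w ! (p + i)"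
    by fastforce
qed

lemma good_Nil: "good []"
  by (auto simp add: good_def power7_free_def sparse_repeats_def)

definition periodic_index :: "nat \<Rightarrow> nat \<Rightarrow> nat \<Rightarrow> nat" where
  "periodic_index m d k = (if k < m then k else m - d + (k - m) mod d)"

definition periodic_ext :: "word \<Rightarrow> nat \<Rightarrow> nat \<Rightarrow> word" where
  "periodic_ext u d N = map (\<lambda>k. u ! periodic_index (length u) d k) [0..<N]"

lemma periodic_index_less: "0 < d \<Longrightarrow> d \<le> m \<Longrightarrow> periodic_index m d k < m"
proof (cases "k < m")
  case False
  moreover assume "0 < d" "d \<le> m"
  moreover have "(k - m) mod d < d"
    using \<open>0 < d\<close> by simp
  ultimately show ?thesis
    by (simp add: periodic_index_def)
qed (simp add: periodic_index_def)

lemma periodic_index_diff: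
  assumes "m \<le> k" "0 < d" "d \<le> m"
  shows "periodic_index m d (k - d) = periodic_index m d k"
proof (cases "k - d < m")
  case True
  then have "(k - m) mod d = k - d - (m - d)"
    using assms by simp
  then show ?thesis
    using assms True by (simp add: periodic_index_def)
next
  case False
  have "k - m = (k - d - m) + d"
    using False assms by arith
  then have "(k - m) mod d = (k - d - m) mod d"
    by simp
  then show ?thesis
    using assms False by (simp add: periodic_index_def)
qed

lemma eq_periodic_ext:
  assumes "length w = N" "m \<le> N" "0 < d" "d \<le> m"
    and period: "\<And>k. m \<le> k \<Longrightarrow> k < N \<Longrightarrow> w ! k = w ! (k - d)"
  shows "w = periodic_ext (take m w) d N"
proof -
  have "w ! k = w ! periodic_index m d k" if "k < N" for k
    using that
  proof (induction k rule: less_induct)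
    case (less k)
    show ?case
    proof (cases "k < m")
      case True
      then show ?thesis by (simp add: periodic_index_def)
    next
      case False
      then have "w ! k = w ! (k - d)"
        using period less.prems by simp
      also have "\<dots> = w ! periodic_index m d (k - d)"
        using less.IH[of "k - d"] less.prems False assms(3,4) by simp
      also have "\<dots> = w ! periodic_index m d k"
        using False assms(3,4) by (simp add: periodic_index_diff)
      finally show ?thesis .
    qed
  qed
  moreover have "length (take m w) = m"
    using assms(1,2) by simp
  ultimately show ?thesis
    using assms periodic_index_less by (intro nth_equalityI) (auto simp: periodic_ext_def)
qed

section \<open>Counting good words\<close>

definition good_words :: "nat \<Rightarrow> word set" where
  "good_words n = {w. length w = n \<and> good w}"

definition newly_bad :: "nat \<Rightarrow> word set" where
  "newly_bad n = {w. length w = Suc n \<and> good (take n w) \<and> \<not> good w}"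

lemma UNIV_letter: "(UNIV :: letter set) = {a, b}"
  using letter.exhaust by auto

lemma finite_letter: "finite (UNIV :: letter set)"
  by (simp add: UNIV_letter)

lemma finite_good_words: "finite (good_words n)"
proof (rule finite_subset)
  show "finite {w :: word. length w = n}"
    using finite_lists_length_eq[OF finite_letter, of n] by simp
qed (auto simp: good_words_def)

lemma card_good_words_Suc: "card (good_words (Suc n)) + card (newly_bad n) = 2 * card (good_words n)"
proof -
  let ?E = "{w. length w = Suc n \<and> good (take n w)}"
  have E: "?E = (\<lambda>(u, c). u @ [c]) ` (good_words n \<times> UNIV)"
  proof (intro set_eqI iffI)
    fix w assume "w \<in> ?E"
    then have "w = take n w @ [w ! n]" "take n w \<in> good_words n"
      by (auto simp: good_words_def take_Suc_conv_app_nth[symmetric])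
    then show "w \<in> (\<lambda>(u, c). u @ [c]) ` (good_words n \<times> UNIV)"
      by (metis (no_types, lifting) UNIV_I case_prod_conv mem_Sigma_iff rev_image_eqI)
  qed (auto simp: good_words_def)
  have "inj_on (\<lambda>(u, c). u @ [c]) (good_words n \<times> (UNIV :: letter set))"
    by (auto simp: inj_on_def)
  then have "card ?E = 2 * card (good_words n)"
    by (simp add: E card_image card_cartesian_product UNIV_letter)
  moreover have "?E = good_words (Suc n) \<union> newly_bad n" "good_words (Suc n) \<inter> newly_bad n = {}"
    by (auto simp: good_words_def newly_bad_def good_take)
  moreover have "finite ?E"
    using E finite_good_words by (simp add: UNIV_letter)
  ultimately show ?thesis
    by (simp add: card_Un_disjoint)
qed

lemma newly_bad_subset:
  "newly_bad n \<subseteq>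
     (\<Union>j\<in>{j. 0 < j \<and> 7 * j \<le> Suc n}. (\<lambda>u. periodic_ext u j (Suc n)) ` good_words (Suc n - 6 * j)) \<union>
     (\<Union>e\<in>{e. e \<le> n \<and> repeat_bound e \<le> e}.
        (\<lambda>u. periodic_ext u (Suc n - e) (Suc n)) ` good_words (Suc n - repeat_bound e))"
    (is "_ \<subseteq> ?P \<union> ?R")
proof
  fix w assume "w \<in> newly_bad n"
  then have len: "length w = Suc n" and good_prefix: "good (take n w)" and "\<not> good w"
    by (auto simp: newly_bad_def)
  have good_take_w: "take m w \<in> good_words m" if "m \<le> n" for m
    using good_take[OF good_prefix, of m] len that by (simp add: good_words_def min_def)
  from \<open>\<not> good w\<close> consider
    (power) p j where "0 < j" "p + 7 * j \<le> Suc n" "\<forall>i<6 * j. w ! (p + j + i) = w ! (p + i)"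
  | (repeat) p q l where "p < q" "q + l \<le> Suc n" "repeat_bound (p + l) \<le> l" "\<forall>i<l. w ! (q + i) = w ! (p + i)"
    unfolding good_def power7_free_def sparse_repeats_def len by blast
  then show "w \<in> ?P \<union> ?R"
  proof cases
    case power
    have end_last: "p + 7 * j = Suc n"
    proof (rule ccontr)
      assume "p + 7 * j \<noteq> Suc n"
      then have "p + 7 * j \<le> length (take n w)"
        using power(2) len by simp
      then obtain i where "i < 6 * j" "take n w ! (p + j + i) \<noteq> take n w ! (p + i)"
        using good_prefix power(1) unfolding good_def power7_free_def by blast
      moreover have "p + j + i < n"
        using \<open>p + 7 * j \<noteq> Suc n\<close> power(2) \<open>i < 6 * j\<close> by simp
      ultimately show False
        using power(3) by simp
    qed
    have w_eq: "w = periodic_ext (take (p + j) w) j (Suc n)"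
    proof (rule eq_periodic_ext)
      fix k assume "p + j \<le> k" "k < Suc n"
      then show "w ! k = w ! (k - j)"
        using power(3)[rule_format, of "k - (p + j)"] end_last by simp
    qed (use len power end_last in auto)
    have "p + j = Suc n - 6 * j"
      using end_last by simp
    then have "take (p + j) w \<in> good_words (Suc n - 6 * j)"
      using good_take_w[of "p + j"] end_last power(1) by simp
    with w_eq have "w \<in> (\<lambda>u. periodic_ext u j (Suc n)) ` good_words (Suc n - 6 * j)"
      by (rule image_eqI)
    then show ?thesis
      using power(1) end_last by (intro UnI1 UN_I[of j]) auto
  next
    case repeat
    have end_last: "q + l = Suc n"
    proof (rule ccontr)
      assume "q + l \<noteq> Suc n"
      then have "q + l \<le> length (take n w)"
        using repeat(2) len by simp
      then obtain i where "i < l" "take n w ! (q + i) \<noteq> take n w ! (p + i)"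
        using good_prefix repeat(1,3) unfolding good_def sparse_repeats_def by blast
      moreover have "q + i < n"
        using \<open>q + l \<noteq> Suc n\<close> repeat(2) \<open>i < l\<close> by simp
      ultimately show False
        using repeat(1,4) by simp
    qed
    define e where "e = p + l"
    have "0 < repeat_bound e"
      by (rule repeat_bound_pos)
    have w_eq: "w = periodic_ext (take (Suc n - repeat_bound e) w) (Suc n - e) (Suc n)"
    proof (rule eq_periodic_ext)
      fix k assume k: "Suc n - repeat_bound e \<le> k" "k < Suc n"
      then have "q \<le> k"
        using repeat(3) end_last unfolding e_def by linarith
      moreover have "k - q < l"
        using k end_last \<open>q \<le> k\<close> by simp
      ultimately have "w ! (q + (k - q)) = w ! (p + (k - q))"
        using repeat(4) by blast
      moreover have "q + (k - q) = k" "p + (k - q) = k - (Suc n - e)"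
        using \<open>q \<le> k\<close> repeat(1) end_last unfolding e_def by auto
      ultimately show "w ! k = w ! (k - (Suc n - e))"
        by simp
    qed (use len repeat end_last \<open>0 < repeat_bound e\<close> in \<open>auto simp: e_def\<close>)
    have "take (Suc n - repeat_bound e) w \<in> good_words (Suc n - repeat_bound e)"
      using good_take_w[of "Suc n - repeat_bound e"] \<open>0 < repeat_bound e\<close> by simp
    with w_eq have "w \<in> (\<lambda>u. periodic_ext u (Suc n - e) (Suc n)) ` good_words (Suc n - repeat_bound e)"
      by (rule image_eqI)
    then show ?thesis
      using repeat end_last by (intro UnI2 UN_I[of e]) (auto simp: e_def)
  qed
qed

lemma card_newly_bad_le:
  "card (newly_bad n) \<le>
     (\<Sum>j\<in>{j. 0 < j \<and> 7 * j \<le> Suc n}. card (good_words (Suc n - 6 * j))) +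
     (\<Sum>e\<in>{e. e \<le> n \<and> repeat_bound e \<le> e}. card (good_words (Suc n - repeat_bound e)))"
proof -
  have fin: "finite {j. 0 < j \<and> 7 * j \<le> Suc n}" "finite {e. e \<le> n \<and> repeat_bound e \<le> e}"
    by (auto intro: finite_subset[of _ "{..Suc n}"])
  have "card (newly_bad n) \<le>
     card (\<Union>j\<in>{j. 0 < j \<and> 7 * j \<le> Suc n}. (\<lambda>u. periodic_ext u j (Suc n)) ` good_words (Suc n - 6 * j)) +
     card (\<Union>e\<in>{e. e \<le> n \<and> repeat_bound e \<le> e}.
        (\<lambda>u. periodic_ext u (Suc n - e) (Suc n)) ` good_words (Suc n - repeat_bound e))"
    by (rule order_trans[OF card_mono[OF _ newly_bad_subset] card_Un_le])
      (use fin finite_good_words in auto)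
  also have "\<dots> \<le>
     (\<Sum>j\<in>{j. 0 < j \<and> 7 * j \<le> Suc n}. card ((\<lambda>u. periodic_ext u j (Suc n)) ` good_words (Suc n - 6 * j))) +
     (\<Sum>e\<in>{e. e \<le> n \<and> repeat_bound e \<le> e}.
        card ((\<lambda>u. periodic_ext u (Suc n - e) (Suc n)) ` good_words (Suc n - repeat_bound e)))"
    by (intro add_mono card_UN_le fin)
  also have "\<dots> \<le>
     (\<Sum>j\<in>{j. 0 < j \<and> 7 * j \<le> Suc n}. card (good_words (Suc n - 6 * j))) +
     (\<Sum>e\<in>{e. e \<le> n \<and> repeat_bound e \<le> e}. card (good_words (Suc n - repeat_bound e)))"
    by (intro add_mono sum_mono card_image_le finite_good_words)
  finally show ?thesis .
qed

lemma sum_power_periods_le: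
  fixes F :: real
  assumes growth: "\<And>k. k \<le> n \<Longrightarrow> real (card (good_words k)) \<le> (2/3) ^ (n - k) * F"
    and "0 \<le> F"
  shows "(\<Sum>j\<in>{j. 0 < j \<and> 7 * j \<le> Suc n}. real (card (good_words (Suc n - 6 * j)))) \<le> 96/665 * F"
proof -
  have "(\<Sum>j\<in>{j. 0 < j \<and> 7 * j \<le> Suc n}. real (card (good_words (Suc n - 6 * j))))
      \<le> (\<Sum>j\<in>{j. 0 < j \<and> 7 * j \<le> Suc n}. 3/2 * F * (64/729) ^ j)"
  proof (rule sum_mono)
    fix j assume "j \<in> {j. 0 < j \<and> 7 * j \<le> Suc n}"
    then obtain i where j: "j = Suc i" "7 * j \<le> Suc n"
      by (auto simp: gr0_conv_Suc)
    then have "n - (Suc n - 6 * j) = 6 * i + 5"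
      by simp
    then have "real (card (good_words (Suc n - 6 * j))) \<le> (2/3) ^ (6 * i + 5) * F"
      using growth[of "Suc n - 6 * j"] by simp
    also have "(2/3 :: real) ^ (6 * i + 5) = 3/2 * (64/729) ^ j"
      by (simp add: j power_add power_mult power_divide)
    finally show "real (card (good_words (Suc n - 6 * j))) \<le> 3/2 * F * (64/729) ^ j"
      by (simp add: mult_ac)
  qed
  also have "\<dots> \<le> (\<Sum>j\<in>{1..n}. 3/2 * F * (64/729) ^ j)"
    using \<open>0 \<le> F\<close> by (intro sum_mono2) auto
  also have "\<dots> = 3/2 * F * (\<Sum>j\<in>{1..n}. (64/729) ^ j)"
    by (simp add: sum_distrib_left)
  also have "\<dots> \<le> 3/2 * F * (64/665)"
  proof (intro mult_left_mono)
    show "(\<Sum>j\<in>{1..n}. (64/729 :: real) ^ j) \<le> 64/665"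
      by (simp add: sum_gp)
  qed (use \<open>0 \<le> F\<close> in simp)
  finally show ?thesis
    by simp
qed

lemma sum_inverse_consecutive_le_one: "(\<Sum>e<N. 1 / ((real e + 1) * (real e + 2))) \<le> 1"
proof -
  have "(\<Sum>e<N. 1 / ((real e + 1) * (real e + 2))) = (\<Sum>e<N. 1 / (real e + 1) - 1 / (real (Suc e) + 1))"
    by (intro sum.cong) (auto simp: field_simps)
  also have "\<dots> = 1 - 1 / (real N + 1)"
    by (subst sum_lessThan_telescope') simp
  finally show ?thesis
    by simp
qed

lemma sum_repeat_lengths_le:
  fixes F :: real
  assumes growth: "\<And>k. k \<le> n \<Longrightarrow> real (card (good_words k)) \<le> (2/3) ^ (n - k) * F"
    and "0 \<le> F"
  shows "(\<Sum>e\<in>{e. e \<le> n \<and> repeat_bound e \<le> e}. real (card (good_words (Suc n - repeat_bound e)))) \<le> 3/20 * F"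
proof -
  have "(\<Sum>e\<in>{e. e \<le> n \<and> repeat_bound e \<le> e}. real (card (good_words (Suc n - repeat_bound e))))
      \<le> (\<Sum>e\<in>{e. e \<le> n \<and> repeat_bound e \<le> e}. 3/20 * F * (1 / ((real e + 1) * (real e + 2))))"
  proof (rule sum_mono)
    fix e assume e: "e \<in> {e. e \<le> n \<and> repeat_bound e \<le> e}"
    obtain i where i: "repeat_bound e = Suc i"
      using repeat_bound_pos gr0_conv_Suc by blast
    then have "n - (Suc n - repeat_bound e) = i"
      using e by simp
    then have "real (card (good_words (Suc n - repeat_bound e))) \<le> (2/3) ^ i * F"
      using growth[of "Suc n - repeat_bound e"] i by simp
    also have "(2/3 :: real) ^ i = 3/2 * (2/3) ^ repeat_bound e"
      using i by simp
    also have "3/2 * (2/3) ^ repeat_bound e * F \<le> 3/2 * (1 / (10 * (real e + 1) * (real e + 2))) * F"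
      using two_thirds_power_repeat_bound[of e] \<open>0 \<le> F\<close> by (intro mult_right_mono mult_left_mono) auto
    also have "\<dots> = 3/20 * F * (1 / ((real e + 1) * (real e + 2)))"
      by (simp add: field_simps)
    finally show "real (card (good_words (Suc n - repeat_bound e))) \<le> 3/20 * F * (1 / ((real e + 1) * (real e + 2)))" .
  qed
  also have "\<dots> \<le> (\<Sum>e<Suc n. 3/20 * F * (1 / ((real e + 1) * (real e + 2))))"
    using \<open>0 \<le> F\<close> by (intro sum_mono2) auto
  also have "\<dots> = 3/20 * F * (\<Sum>e<Suc n. 1 / ((real e + 1) * (real e + 2)))"
    by (simp only: sum_distrib_left)
  also have "\<dots> \<le> 3/20 * F * 1"
    using sum_inverse_consecutive_le_one[of "Suc n"] \<open>0 \<le> F\<close> by (intro mult_left_mono) auto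
  finally show ?thesis
    by simp
qed

lemma card_good_words_Suc_ge:
  assumes "\<And>k. k \<le> n \<Longrightarrow> real (card (good_words k)) \<le> (2/3) ^ (n - k) * real (card (good_words n))"
  shows "3/2 * real (card (good_words n)) \<le> real (card (good_words (Suc n)))"
proof -
  let ?F = "real (card (good_words n))"
  have "real (card (newly_bad n)) \<le>
     (\<Sum>j\<in>{j. 0 < j \<and> 7 * j \<le> Suc n}. real (card (good_words (Suc n - 6 * j)))) +
     (\<Sum>e\<in>{e. e \<le> n \<and> repeat_bound e \<le> e}. real (card (good_words (Suc n - repeat_bound e))))"
    using card_newly_bad_le[of n] by (simp flip: of_nat_sum of_nat_add)
  also have "\<dots> \<le> 96/665 * ?F + 3/20 * ?F"
    using sum_power_periods_le[OF assms] sum_repeat_lengths_le[OF assms] by (intro add_mono) auto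
  finally have "real (card (newly_bad n)) \<le> ?F / 2"
    by simp
  moreover have "real (card (good_words (Suc n))) + real (card (newly_bad n)) = 2 * ?F"
    using card_good_words_Suc[of n] by (metis of_nat_add of_nat_mult of_nat_numeral)
  ultimately show ?thesis
    by linarith
qed

lemma good_words_growth:
  "(\<forall>k\<le>n. real (card (good_words k)) \<le> (2/3) ^ (n - k) * real (card (good_words n))) \<and>
   0 < card (good_words n)"
proof (induction n)
  case 0
  have "good_words 0 = {[]}"
    using good_Nil by (auto simp: good_words_def)
  then show ?case
    by simp
next
  case (Suc n)
  let ?F = "real (card (good_words n))" and ?F' = "real (card (good_words (Suc n)))"
  have grow: "3/2 * ?F \<le> ?F'"
    using Suc.IH by (intro card_good_words_Suc_ge) auto
  have "real (card (good_words k)) \<le> (2/3) ^ (Suc n - k) * ?F'" if "k \<le> Suc n" for k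
  proof (cases "k = Suc n")
    case False
    then have "k \<le> n"
      using that by simp
    then have "real (card (good_words k)) \<le> (2/3) ^ (n - k) * ?F"
      using Suc.IH by blast
    also have "\<dots> \<le> (2/3) ^ (n - k) * (2/3 * ?F')"
      using grow by (intro mult_left_mono) auto
    also have "\<dots> = (2/3) ^ (Suc n - k) * ?F'"
      using \<open>k \<le> n\<close> by (simp add: Suc_diff_le)
    finally show ?thesis .
  qed simp
  moreover have "0 < ?F'"
    using grow Suc.IH by linarith
  ultimately show ?case
    by simp
qed

lemma good_words_nonempty: "good_words n \<noteq> {}"
  using good_words_growth[of n] by auto

section \<open>An infinite word with good prefixes\<close>

definition extendable :: "(word \<Rightarrow> bool) \<Rightarrow> word \<Rightarrow> bool" where
  "extendable P w \<longleftrightarrow> (\<forall>m. \<exists>v. length v = m \<and> P (w @ v))"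

primrec greedy_prefix :: "(word \<Rightarrow> bool) \<Rightarrow> nat \<Rightarrow> word" where
  "greedy_prefix P 0 = []"
| "greedy_prefix P (Suc n) =
     (if extendable P (greedy_prefix P n @ [a]) then greedy_prefix P n @ [a] else greedy_prefix P n @ [b])"

lemma extendable_snoc:
  fixes P :: "word \<Rightarrow> bool"
  assumes prefix_closed: "\<And>w m. P w \<Longrightarrow> P (take m w)" and "extendable P w"
  shows "extendable P (w @ [a]) \<or> extendable P (w @ [b])"
proof (rule ccontr)
  assume "\<not> (extendable P (w @ [a]) \<or> extendable P (w @ [b]))"
  then obtain ma mb where ma: "\<And>v. length v = ma \<Longrightarrow> \<not> P (w @ [a] @ v)"
      and mb: "\<And>v. length v = mb \<Longrightarrow> \<not> P (w @ [b] @ v)"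
    unfolding extendable_def by auto
  obtain v where "length v = Suc (max ma mb)" "P (w @ v)"
    using assms(2) unfolding extendable_def by blast
  then obtain c v' where v: "v = c # v'" "max ma mb \<le> length v'"
    by (cases v) auto
  have "P (w @ [c] @ take m v')" for m
    using prefix_closed[OF \<open>P (w @ v)\<close>, of "length w + 1 + m"] v by simp
  then show False
    using ma[of "take ma v'"] mb[of "take mb v'"] v by (cases c) auto
qed

lemma greedy_prefix_extendable:
  fixes P :: "word \<Rightarrow> bool"
  assumes "\<And>w m. P w \<Longrightarrow> P (take m w)" and "\<And>n. \<exists>w. length w = n \<and> P w"
  shows "extendable P (greedy_prefix P n) \<and> length (greedy_prefix P n) = n"
proof (induction n)
  case 0
  show ?case
    using assms(2) by (simp add: extendable_def)
next
  case (Suc n)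
  then show ?case
    using extendable_snoc[of P "greedy_prefix P n"] assms(1) by auto
qed

lemma exists_infinite_word:
  fixes P :: "word \<Rightarrow> bool"
  assumes "\<And>w m. P w \<Longrightarrow> P (take m w)" and "\<And>n. \<exists>w. length w = n \<and> P w"
  shows "\<exists>x. \<forall>n. P (map x [0..<n])"
proof -
  define x where "x i = greedy_prefix P (Suc i) ! i" for i
  have "greedy_prefix P n = map x [0..<n]" for n
  proof (induction n)
    case (Suc n)
    have "greedy_prefix P (Suc n) = greedy_prefix P n @ [x n]"
      using greedy_prefix_extendable[OF assms, of n] by (auto simp: x_def nth_append)
    then show ?case
      using Suc by simp
  qed simp
  moreover have "P (greedy_prefix P n)" for n
    using greedy_prefix_extendable[OF assms, of n] unfolding extendable_def
    by (metis append_Nil2 length_0_conv)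
  ultimately show ?thesis
    by metis
qed

definition inf_word :: "nat \<Rightarrow> letter" where
  "inf_word = (SOME x. \<forall>n. good (map x [0..<n]))"

lemma good_inf_word_prefix: "good (map inf_word [0..<n])"
proof -
  have "\<exists>x. \<forall>n. good (map x [0..<n])"
    using good_take good_words_nonempty by (intro exists_infinite_word) (auto simp: good_words_def)
  then have "\<forall>n. good (map inf_word [0..<n])"
    unfolding inf_word_def by (rule someI_ex)
  then show ?thesis ..
qed

definition factor :: "(nat \<Rightarrow> letter) \<Rightarrow> nat \<Rightarrow> nat \<Rightarrow> word" where
  "factor x s n = map x [s..<s + n]"

lemma length_factor [simp]: "length (factor x s n) = n"
  by (simp add: factor_def)

lemma nth_factor [simp]: "i < n \<Longrightarrow> factor x s n ! i = x (s + i)"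
  by (simp add: factor_def)

lemma factor_eq_iff: "factor x p l = factor x q l \<longleftrightarrow> (\<forall>i<l. x (p + i) = x (q + i))"
  by (simp add: list_eq_iff_nth_eq)

lemma take_drop_factor: "i + l \<le> n \<Longrightarrow> take l (drop i (factor x s n)) = factor x (s + i) l"
  by (simp add: list_eq_iff_nth_eq add.assoc)

lemma sublist_factorE:
  assumes "sublist V (factor x s n)"
  obtains t where "t + length V \<le> n" "V = factor x (s + t) (length V)"
proof -
  obtain ps ss where eq: "factor x s n = ps @ V @ ss"
    using assms by (auto simp: sublist_def)
  then have "length ps + length V \<le> n"
    by (metis add.assoc le_add1 length_append length_factor)
  moreover have "V = take (length V) (drop (length ps) (factor x s n))"
    by (simp add: eq)
  ultimately show ?thesis
    using that take_drop_factor by metis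
qed

lemma inf_word_power7_free:
  assumes "0 < j"
  shows "\<exists>i<6 * j. inf_word (p + j + i) \<noteq> inf_word (p + i)"
proof -
  have "power7_free (map inf_word [0..<p + 7 * j])"
    using good_inf_word_prefix by (simp add: good_def)
  then have "\<exists>i<6 * j. map inf_word [0..<p + 7 * j] ! (p + j + i) \<noteq> map inf_word [0..<p + 7 * j] ! (p + i)"
    using assms unfolding power7_free_def by simp
  then show ?thesis
    by auto
qed

lemma inf_word_factor_unique:
  assumes "factor inf_word p l = factor inf_word q l" "min p q + l \<le> e" "repeat_bound e \<le> l"
  shows "p = q"
proof (rule ccontr)
  assume "p \<noteq> q"
  define p' q' where "p' = min p q" and "q' = max p q"
  have "p' < q'"
    using \<open>p \<noteq> q\<close> by (simp add: p'_def q'_def)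
  have same: "inf_word (q' + i) = inf_word (p' + i)" if "i < l" for i
    using assms(1) that unfolding factor_eq_iff p'_def q'_def by (cases "p \<le> q") auto
  have "repeat_bound (p' + l) \<le> l"
    using repeat_bound_mono[of "p' + l" e] assms(2,3) by (simp add: p'_def)
  moreover have "sparse_repeats (map inf_word [0..<q' + l])"
    using good_inf_word_prefix by (simp add: good_def)
  ultimately have "\<exists>i<l. map inf_word [0..<q' + l] ! (q' + i) \<noteq> map inf_word [0..<q' + l] ! (p' + i)"
    using \<open>p' < q'\<close> unfolding sparse_repeats_def by simp
  then show False
    using same \<open>p' < q'\<close> by auto
qed

lemma nth_concat_replicate_shift:
  assumes "length Y + i < k * length Y"
  shows "concat (replicate k Y) ! (length Y + i) = concat (replicate k Y) ! i"
proof -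
  obtain k' where k: "k = Suc k'"
    using assms by (cases k) auto
  define Z where "Z = concat (replicate k' Y)"
  have "Z @ Y = Y @ Z"
    unfolding Z_def by (induction k') auto
  then have "concat (replicate k Y) = Y @ Z" "concat (replicate k Y) = Z @ Y"
    by (simp_all add: k Z_def)
  moreover have "i < length Z"
    using assms k by (simp add: Z_def length_concat sum_list_replicate)
  ultimately show ?thesis
    by (metis nth_append nth_append_length_plus)
qed

lemma aperiodic_factor_inf_word: "aperiodic 7 (factor inf_word s n)"
  unfolding aperiodic_def
proof (intro notI, elim exE conjE)
  fix Y assume "Y \<noteq> []" and "sublist (concat (replicate 7 Y)) (factor inf_word s n)"
  then obtain t where t: "concat (replicate 7 Y) = factor inf_word (s + t) (7 * length Y)"
    by (elim sublist_factorE) (simp add: length_concat sum_list_replicate)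
  have "inf_word (s + t + length Y + i) = inf_word (s + t + i)" if "i < 6 * length Y" for i
    using nth_concat_replicate_shift[of Y i 7] that unfolding t by (simp add: add.assoc)
  then show False
    using inf_word_power7_free[of "length Y" "s + t"] \<open>Y \<noteq> []\<close> by auto
qed

lemma occurrences_factor_inf_word:
  assumes "sublist V (factor inf_word s n)" "repeat_bound (s + n) \<le> length V"
  shows "occurrences V (factor inf_word s n) = 1"
proof -
  obtain t where t: "t + length V \<le> n" "V = factor inf_word (s + t) (length V)"
    using assms(1) by (rule sublist_factorE)
  have "{i. i + length V \<le> n \<and> take (length V) (drop i (factor inf_word s n)) = V} = {t}"
  proof (intro set_eqI iffI)
    fix i assume "i \<in> {i. i + length V \<le> n \<and> take (length V) (drop i (factor inf_word s n)) = V}"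
    then have "i + length V \<le> n"
        "factor inf_word (s + i) (length V) = factor inf_word (s + t) (length V)"
      using t by (auto simp: take_drop_factor)
    then have "s + i = s + t"
      using assms(2) by (intro inf_word_factor_unique[where e = "s + n"]) auto
    then show "i \<in> {t}"
      by simp
  qed (use t in \<open>auto simp: take_drop_factor\<close>)
  then show ?thesis
    by (simp add: occurrences_def)
qed

section \<open>Blocks\<close>

definition block_count :: "nat \<Rightarrow> nat \<Rightarrow> nat" where
  "block_count R n = 2 ^ (n div (8 * R))"

definition block_start :: "nat \<Rightarrow> nat \<Rightarrow> nat" where
  "block_start R n = (\<Sum>m<n. m * block_count R m)"

definition block :: "nat \<Rightarrow> nat \<Rightarrow> nat \<Rightarrow> word" where
  "block R n j = factor inf_word (block_start R n + j * n) n"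

lemma length_block [simp]: "length (block R n j) = n"
  by (simp add: block_def)

definition blocks :: "nat \<Rightarrow> nat \<Rightarrow> word set" where
  "blocks R n0 = {block R n j | n j. n0 \<le> n \<and> j < block_count R n}"

lemma block_count_mono: "m \<le> n \<Longrightarrow> block_count R m \<le> block_count R n"
  unfolding block_count_def by (intro power_increasing div_le_mono) auto

lemma block_start_mono: "m \<le> n \<Longrightarrow> block_start R m \<le> block_start R n"
  unfolding block_start_def by (rule sum_mono2) auto

lemma block_end: "j < block_count R n \<Longrightarrow> block_start R n + j * n + n \<le> block_start R (Suc n)"
proof -
  assume "j < block_count R n"
  then have "j * n + n \<le> block_count R n * n"
    by (metis add.commute mult_Suc mult_le_mono1 Suc_leI)
  then show ?thesis
    by (simp add: block_start_def mult.commute)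
qed

lemma block_start_Suc_le: "block_start R (Suc n) \<le> (n + 1) ^ 2 * block_count R n"
proof -
  have "block_start R (Suc n) \<le> (\<Sum>m<Suc n. n * block_count R n)"
    unfolding block_start_def by (intro sum_mono mult_le_mono block_count_mono) auto
  also have "\<dots> = ((n + 1) * n) * block_count R n"
    by (simp add: algebra_simps)
  also have "\<dots> \<le> (n + 1) ^ 2 * block_count R n"
    by (intro mult_le_mono1) (simp add: power2_eq_square)
  finally show ?thesis .
qed

lemma block_position_unique:
  assumes "j < block_count R n" "j' < block_count R n'"
    and "block_start R n + j * n \<le> x" "x < block_start R n + j * n + n"
    and "block_start R n' + j' * n' \<le> x" "x < block_start R n' + j' * n' + n'"
  shows "n = n' \<and> j = j'"
proof -
  have "n = n'"
  proof (rule ccontr)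
    assume "n \<noteq> n'"
    then consider "Suc n \<le> n'" | "Suc n' \<le> n"
      by linarith
    then show False
    proof cases
      case 1
      then show False
        using block_start_mono[OF 1, of R] block_end[OF assms(1)] assms(4,5) by linarith
    next
      case 2
      then show False
        using block_start_mono[OF 2, of R] block_end[OF assms(2)] assms(3,6) by linarith
    qed
  qed
  moreover have "j = j'"
  proof (rule ccontr)
    assume "j \<noteq> j'"
    then consider "Suc j \<le> j'" | "Suc j' \<le> j"
      by linarith
    then show False
    proof cases
      case 1
      then show False
        using mult_le_mono1[OF 1, of n] assms(4,5) \<open>n = n'\<close> by simp
    next
      case 2
      then show False
        using mult_le_mono1[OF 2, of n] assms(3,6) \<open>n = n'\<close> by simp
    qed
  qed
  ultimately show ?thesis ..
qed

lemma block_determined_by_long_subword: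
  assumes "j < block_count R n" "j' < block_count R n'"
    and "sublist V (block R n j)" "sublist V (block R n' j')"
    and "repeat_bound (block_start R (Suc n)) \<le> length V"
  shows "n = n' \<and> j = j'"
proof -
  obtain t where t: "t + length V \<le> n" "V = factor inf_word (block_start R n + j * n + t) (length V)"
    using assms(3) unfolding block_def by (rule sublist_factorE)
  obtain t' where t': "t' + length V \<le> n'" "V = factor inf_word (block_start R n' + j' * n' + t') (length V)"
    using assms(4) unfolding block_def by (rule sublist_factorE)
  have "block_start R n' + j' * n' + t' = block_start R n + j * n + t"
    using t t' block_end[OF assms(1)] assms(5)
    by (intro inf_word_factor_unique[where e = "block_start R (Suc n)"]) auto
  moreover have "0 < length V"
    using repeat_bound_pos assms(5) by (rule order.strict_trans2)
  then have "t < n" "t' < n'"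
    using t(1) t'(1) by linarith+
  ultimately show ?thesis
    by (intro block_position_unique[OF assms(1,2), of "block_start R n + j * n + t"]) simp_all
qed

lemma inj_on_block:
  assumes "repeat_bound (block_start R (Suc n)) \<le> n"
  shows "inj_on (block R n) {..<block_count R n}"
proof (rule inj_onI)
  fix j j' assume "j \<in> {..<block_count R n}" "j' \<in> {..<block_count R n}" "block R n j = block R n j'"
  then show "j = j'"
    using block_determined_by_long_subword[of j R n j' n "block R n j"] assms by simp
qed

lemma Suc_pow4_le_double: "18 \<le> r \<Longrightarrow> (r + 1) ^ 4 \<le> 2 * (r :: nat) ^ 4"
proof -
  assume "18 \<le> r"
  then have "r ^ 2 \<le> r ^ 3" "r \<le> r ^ 3" "1 \<le> r ^ 3" "18 * r ^ 3 \<le> r ^ 4"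
    by (auto simp: power_eq_if)
  moreover have "(r + 1) ^ 4 = r ^ 4 + 4 * r ^ 3 + 6 * r ^ 2 + 4 * r + 1"
    by (simp add: algebra_simps power_eq_if)
  ultimately show ?thesis
    by linarith
qed

lemma Suc_pow4_le_two_pow: "17 \<le> q \<Longrightarrow> (q + 1) ^ 4 \<le> (2 :: nat) ^ q"
proof (induction q rule: dec_induct)
  case (step q)
  then have "(Suc q + 1) ^ 4 \<le> 2 * (q + 1) ^ 4"
    using Suc_pow4_le_double[of "q + 1"] by simp
  then show ?case
    using step.IH by simp
qed simp

lemma poly_le_four_pow: "\<exists>q0. \<forall>q\<ge>q0. A * (q + 1) ^ 4 \<le> (4 :: nat) ^ q"
proof (intro exI allI impI)
  fix q assume "max 17 A \<le> q"
  then have "(q + 1) ^ 4 \<le> 2 ^ q" "A \<le> 2 ^ q"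
    using Suc_pow4_le_two_pow by (auto intro: order_trans[OF _ less_imp_le[OF less_exp]])
  then have "A * (q + 1) ^ 4 \<le> 2 ^ q * 2 ^ q"
    by (intro mult_le_mono)
  then show "A * (q + 1) ^ 4 \<le> 4 ^ q"
    by (simp flip: power_mult_distrib)
qed

lemma eventually_repeat_bound_block_start:
  assumes "1 \<le> R"
  obtains n0 where "\<And>n. n0 \<le> n \<Longrightarrow> R * repeat_bound (block_start R (Suc n)) \<le> n"
proof -
  obtain q0 where q0: "\<And>q. q0 \<le> q \<Longrightarrow> 90 * (8 * R) ^ 4 * (q + 1) ^ 4 \<le> (4 :: nat) ^ q"
    using poly_le_four_pow by blast
  have "R * repeat_bound (block_start R (Suc n)) \<le> n" if "8 * R * q0 \<le> n" for n
  proof -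
    define q where "q = n div (8 * R)"
    define E where "E = block_start R (Suc n)"
    have "q0 \<le> q"
      using that assms by (simp add: q_def less_eq_div_iff_mult_less_eq mult.commute)
    have "n + 1 \<le> 8 * R * (q + 1)"
    proof -
      have "n mod (8 * R) < 8 * R"
        using assms by simp
      moreover have "n = 8 * R * q + n mod (8 * R)"
        unfolding q_def by simp
      ultimately show ?thesis
        by (simp add: algebra_simps)
    qed
    have "E \<le> (n + 1) ^ 2 * 2 ^ q"
      using block_start_Suc_le[of R n] unfolding E_def q_def block_count_def .
    moreover have "1 \<le> (n + 1) ^ 2 * (2::nat) ^ q"
      by (simp add: Suc_le_eq)
    ultimately have "E + 2 \<le> 3 * ((n + 1) ^ 2 * 2 ^ q)"
      by linarith
    then have "10 * (E + 1) * (E + 2) \<le> 10 * (3 * ((n + 1) ^ 2 * 2 ^ q)) * (3 * ((n + 1) ^ 2 * 2 ^ q))"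
      by (intro mult_le_mono) auto
    also have "\<dots> = 90 * (n + 1) ^ 4 * (2 ^ q * 2 ^ q)"
      by (simp add: algebra_simps power_mult_distrib flip: power_add)
    also have "\<dots> = 90 * (n + 1) ^ 4 * 4 ^ q"
      by (simp flip: power_mult_distrib)
    also have "\<dots> \<le> 90 * (8 * R * (q + 1)) ^ 4 * 4 ^ q"
      using \<open>n + 1 \<le> 8 * R * (q + 1)\<close> by (intro mult_le_mono power_mono) auto
    also have "\<dots> = (90 * (8 * R) ^ 4 * (q + 1) ^ 4) * 4 ^ q"
      by (simp only: power_mult_distrib mult.assoc)
    also have "\<dots> \<le> 4 ^ q * 4 ^ q"
      using q0[OF \<open>q0 \<le> q\<close>] by (rule mult_le_mono1)
    also have "\<dots> = 2 ^ (4 * q)"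
      by (simp add: power_mult flip: power_mult_distrib)
    finally have "repeat_bound E \<le> 8 * q"
      using repeat_bound_le_double by fastforce
    then have "R * repeat_bound E \<le> 8 * R * q"
      by simp
    also have "\<dots> \<le> n"
      unfolding q_def by (simp add: mult.commute)
    finally show ?thesis
      unfolding E_def .
  qed
  then show thesis
    using that by blast
qed

lemma exponential_if_card_ge_two_pow:
  assumes "0 < M" and card_ge: "\<And>i. C \<le> i \<Longrightarrow> 2 ^ (i div M) \<le> card {Y \<in> \<Y>. length Y \<le> i}"
  shows "exponential \<Y>"
  unfolding exponential_def
proof (intro exI conjI allI impI)
  define c where "c = (2::real) powr (1 / (2 * M))"
  show "1 < c"
    using assms(1) by (simp add: c_def)
  fix i assume i: "max C M \<le> i"
  have "i \<le> 2 * M * (i div M)"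
  proof -
    have "M \<le> M * (i div M)"
      using i assms(1) by (simp add: Suc_le_eq div_greater_zero_iff)
    moreover have "i = M * (i div M) + i mod M" "i mod M < M"
      using assms(1) by simp_all
    ultimately show ?thesis
      by linarith
  qed
  then have "real i / (2 * M) \<le> real (i div M)"
    using assms(1) by (simp add: divide_le_eq mult_ac flip: of_nat_mult)
  have "c ^ i = 2 powr (real i / (2 * M))"
    unfolding c_def by (simp add: powr_powr flip: powr_realpow)
  also have "\<dots> \<le> 2 powr real (i div M)"
    using \<open>real i / (2 * M) \<le> real (i div M)\<close> by (intro powr_mono) auto
  also have "\<dots> = real (2 ^ (i div M))"
    by (simp add: powr_realpow)
  also have "\<dots> \<le> real (card {Y \<in> \<Y>. length Y \<le> i})"
    using card_ge i by simp
  finally show "c ^ i \<le> real (card {Y \<in> \<Y>. length Y \<le> i})" .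
qed

lemma exponential_blocks:
  assumes "1 \<le> R" and short: "\<And>n. n0 \<le> n \<Longrightarrow> R * repeat_bound (block_start R (Suc n)) \<le> n"
  shows "exponential (blocks R n0)"
proof (rule exponential_if_card_ge_two_pow)
  show "0 < 8 * R"
    using assms(1) by simp
  fix i assume "n0 \<le> i"
  have "repeat_bound (block_start R (Suc i)) \<le> i"
    using short[OF \<open>n0 \<le> i\<close>] assms(1) by (metis mult_1 mult_le_mono1 order_trans)
  have "finite {Y \<in> blocks R n0. length Y \<le> i}"
    by (rule finite_subset[OF _ finite_lists_length_le[OF finite_letter, of i]]) auto
  moreover have "block R i ` {..<block_count R i} \<subseteq> {Y \<in> blocks R n0. length Y \<le> i}"
    using \<open>n0 \<le> i\<close> by (auto simp: blocks_def)
  ultimately have "card (block R i ` {..<block_count R i}) \<le> card {Y \<in> blocks R n0. length Y \<le> i}"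
    by (rule card_mono)
  then show "2 ^ (i div (8 * R)) \<le> card {Y \<in> blocks R n0. length Y \<le> i}"
    using card_image[OF inj_on_block[OF \<open>repeat_bound (block_start R (Suc i)) \<le> i\<close>]]
    by (simp add: block_count_def)
qed

lemma long_subword_of_block_unique:
  fixes lam :: real
  assumes short: "\<And>n. n0 \<le> n \<Longrightarrow> R * repeat_bound (block_start R (Suc n)) \<le> n" and "1 \<le> lam * R"
    and "W \<in> blocks R n0" "sublist V W" "lam * length W \<le> length V"
  shows "occurrences V W = 1 \<and> (\<forall>U\<in>blocks R n0. sublist V U \<longrightarrow> U = W)"
proof -
  obtain n j where W: "W = block R n j" "n0 \<le> n" "j < block_count R n"
    using assms(3) by (auto simp: blocks_def)
  define r where "r = repeat_bound (block_start R (Suc n))"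
  have "0 \<le> lam"
  proof (rule ccontr)
    assume "\<not> 0 \<le> lam"
    then have "lam * R \<le> 0"
      by (simp add: mult_nonpos_nonneg)
    then show False
      using assms(2) by simp
  qed
  have "real (R * r) \<le> real n"
    using short[OF W(2)] unfolding r_def by (simp only: of_nat_le_iff)
  have "real r \<le> (lam * R) * real r"
    using assms(2) by (simp add: mult_le_cancel_right1)
  also have "\<dots> = lam * real (R * r)"
    by simp
  also have "\<dots> \<le> lam * real n"
    using \<open>real (R * r) \<le> real n\<close> \<open>0 \<le> lam\<close> by (rule mult_left_mono)
  also have "\<dots> \<le> real (length V)"
    using assms(5) W(1) by simp
  finally have long: "r \<le> length V"
    by simp
  have "repeat_bound (block_start R n + j * n + n) \<le> length V"
    using repeat_bound_mono[OF block_end[OF W(3)]] long unfolding r_def by simp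
  then have "occurrences V W = 1"
    using assms(4) unfolding W(1) block_def by (intro occurrences_factor_inf_word) (simp_all add: add.assoc)
  moreover have "U = W" if U_in: "U \<in> blocks R n0" and "sublist V U" for U
  proof -
    obtain n' j' where U: "U = block R n' j'" "j' < block_count R n'"
      using U_in by (auto simp: blocks_def)
    then have "n = n' \<and> j = j'"
      using block_determined_by_long_subword[OF W(3) U(2)] assms(4) \<open>sublist V U\<close> long W(1)
      unfolding r_def by simp
    then show "U = W"
      using U(1) W(1) by simp
  qed
  ultimately show ?thesis
    by blast
qed

lemma aperiodic_blocks: "W \<in> blocks R n0 \<Longrightarrow> aperiodic 7 W"
  by (auto simp: blocks_def block_def aperiodic_factor_inf_word)

theorem lemma1:
  fixes lam :: real
  assumes "lam > 0"
  shows "\<exists>\<Y> :: word set. exponential \<Y> \<and>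
    (\<forall>W\<in>\<Y>. \<forall>V. sublist V W \<and> real (length V) \<ge> lam * real (length W) \<longrightarrow>
        occurrences V W = 1 \<and> (\<forall>U\<in>\<Y>. sublist V U \<longrightarrow> U = W)) \<and>
    (\<forall>W\<in>\<Y>. aperiodic 7 W)"
proof -
  define R where "R = max 1 (nat \<lceil>1 / lam\<rceil>)"
  have "1 \<le> R"
    by (simp add: R_def)
  have "1 / lam \<le> real R"
    unfolding R_def by linarith
  then have "1 \<le> lam * R"
    using assms by (simp add: field_simps)
  obtain n0 where short: "\<And>n. n0 \<le> n \<Longrightarrow> R * repeat_bound (block_start R (Suc n)) \<le> n"
    using eventually_repeat_bound_block_start[OF \<open>1 \<le> R\<close>] by blast
  show ?thesis
  proof (intro exI conjI)
    show "exponential (blocks R n0)"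
      using exponential_blocks[OF \<open>1 \<le> R\<close> short] .
    show "\<forall>W\<in>blocks R n0. \<forall>V. sublist V W \<and> lam * real (length W) \<le> real (length V) \<longrightarrow>
        occurrences V W = 1 \<and> (\<forall>U\<in>blocks R n0. sublist V U \<longrightarrow> U = W)"
      using long_subword_of_block_unique[OF short \<open>1 \<le> lam * R\<close>] by blast
    show "\<forall>W\<in>blocks R n0. aperiodic 7 W"
      using aperiodic_blocks by blast
  qed
qed

end
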